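(* Let $\mathbf d=(d_1,\ldots,d_n)$ be a degree sequence, $w\in[n]$, $\hat n$ and $V_w$ as in the context, and assume $\hat n<n$. Let $\mathfrak s_{n,w}(w)$ be the six-length of $w$ in a random functional graph on $V_w$ with in-degrees $(d_v)_{v\in V_w}$ (the graph of a uniformly random $f:V_w\to V_w$ with $|f^{-1}(\{v\})|=d_v$ for all $v\in V_w$), and let $\mathfrak s_n(w)$ be the six-length of $w$ in a random functional graph with degree sequence $\mathbf d$. Then \[\mathfrak s_n(w)\overset{d}{=}\mathcal R\big(n-\hat n,\ \mathfrak s_{n,w}(w),\ \hat n+1-\mathfrak s_{n,w}(w)\big),\] where the Pólya urn quantities $\{\mathcal R(m,a,b)\}$ are independent of $\mathfrak s_{n,w}(w)$; that is, for every $r$, $\mathbb P(\mathfrak s_n(w)=r)=\sum_{s}\mathbb P(\mathfrak s_{n,w}(w)=s)\,\mathbb P(\mathcal R(n-\hat n,s,\hat n+1-s)=r)$.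
   Context: A degree sequence is $\mathbf d=(d_1,\ldots,d_n)\in\mathbb N_0^n$ with $\sum_j d_j=n$; a random functional graph with degree sequence $\mathbf d$ is the graph (edges $(v,f(v))$) of a uniform $F\in\{f:[n]\to[n]: |f^{-1}(\{i\})|=d_i\ \forall i\}$. Six-length: $\mathfrak s_f(v)=\min\{k\in\mathbb N: f^{(k)}(v)\in\{f^{(j)}(v):0\le j\le k-1\}\}$. Let $\sigma^2=\frac1n\sum_j d_j^2-1$ and $\hat n=\lfloor (n\sigma^2)^{4/3}\rfloor$; when $\hat n<n$, $V_w=[n]\setminus\{v_1,\ldots,v_{n-\hat n}\}$ where $v_1,\ldots,v_{n-\hat n}$ are distinct vertices in $[n]\setminus\{w\}$ with $d_{v_i}=1$ chosen by a fixed deterministic rule. Pólya urn: an $(a,b)$-Pólya urn starts with $a$ red and $b$ blue balls; at each step a ball is drawn uniformly at random and returned together with one additional ball of the same colour; $\mathcal R(m,a,b)$ is the number of red balls after $m$ balls have been added. *)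

theory Defs
  imports "HOL-Probability.Probability"
begin

definition fgraphs :: "nat set \<Rightarrow> (nat \<Rightarrow> nat) \<Rightarrow> (nat \<Rightarrow> nat) set" where
  "fgraphs V d = {f \<in> V \<rightarrow>\<^sub>E V. \<forall>v\<in>V. card {u\<in>V. f u = v} = d v}"

definition sixlen :: "(nat \<Rightarrow> nat) \<Rightarrow> nat \<Rightarrow> nat" where
  "sixlen f v = (LEAST k. k \<ge> 1 \<and> (f ^^ k) v \<in> (\<lambda>j. (f ^^ j) v) ` {0..k-1})"

definition sixlen_dist :: "nat set \<Rightarrow> (nat \<Rightarrow> nat) \<Rightarrow> nat \<Rightarrow> nat pmf" where
  "sixlen_dist V d w = map_pmf (\<lambda>f. sixlen f w) (pmf_of_set (fgraphs V d))"

text \<open>Polya urn: distribution of the number of red balls after m balls have been added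
  to an urn starting with a red and b blue balls (recursion on the first draw).\<close>
fun polya :: "nat \<Rightarrow> nat \<Rightarrow> nat \<Rightarrow> nat pmf" where
  "polya 0 a b = return_pmf a"
| "polya (Suc m) a b = bind_pmf (bernoulli_pmf (real a / real (a + b)))
      (\<lambda>c. if c then polya m (a + 1) b else polya m a (b + 1))"

definition sigma2 :: "nat \<Rightarrow> (nat \<Rightarrow> nat) \<Rightarrow> real" where
  "sigma2 n d = (1 / real n) * (\<Sum>j\<in>{1..n}. real (d j) ^ 2) - 1"

definition nhat :: "nat \<Rightarrow> (nat \<Rightarrow> nat) \<Rightarrow> nat" where
  "nhat n d = nat \<lfloor>(real n * sigma2 n d) powr (4 / 3)\<rfloor>"

end

theory Submission
  imports Defs
begin

text \<open>
  The six-length of \<open>w\<close> is the number of distinct points on its forward trajectory.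
  Deleting a vertex \<open>v\<close> of in-degree one and joining its predecessor \<open>x\<close> directly to
  its successor is a bijection between the functional graphs on \<open>V\<close> and the pairs of a
  functional graph on \<open>V - {v}\<close> and an insertion point \<open>x \<in> V\<close>. Under this bijection
  the trajectory of \<open>w \<noteq> v\<close> gains the vertex \<open>v\<close> exactly when \<open>x\<close> lies on the old
  trajectory, so a uniform graph on \<open>V\<close> arises from a uniform graph on \<open>V - {v}\<close> by one
  Polya urn draw with \<open>s\<close> red balls among \<open>|V|\<close>. Reinserting the vertices of \<open>S\<close> one at
  a time gives \<open>|S|\<close> consecutive draws.
\<close>

section \<open>Trajectories and the six-length\<close>

definition trajectory :: "('a \<Rightarrow> 'a) \<Rightarrow> 'a \<Rightarrow> 'a set" where
  "trajectory f w = range (\<lambda>j. (f ^^ j) w)"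

lemma start_in_trajectory [simp]: "w \<in> trajectory f w"
  unfolding trajectory_def by (rule range_eqI[of _ _ 0]) simp

lemma trajectory_closed:
  assumes "y \<in> trajectory f w"
  shows "f y \<in> trajectory f w"
proof -
  obtain j where "y = (f ^^ j) w"
    using assms unfolding trajectory_def by blast
  then have "f y = (f ^^ Suc j) w" by simp
  then show ?thesis unfolding trajectory_def by blast
qed

lemma trajectory_subsetI:
  assumes "w \<in> A" "\<And>y. y \<in> A \<Longrightarrow> f y \<in> A"
  shows "trajectory f w \<subseteq> A"
proof -
  have "(f ^^ j) w \<in> A" for j
    by (induction j) (simp_all add: assms)
  then show ?thesis unfolding trajectory_def by blast
qed

lemma trajectory_subset_Pi:
  assumes "f \<in> A \<rightarrow> A" "w \<in> A"
  shows "trajectory f w \<subseteq> A"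
  by (rule trajectory_subsetI[OF assms(2)]) (use assms(1) in auto)

lemma trajectory_eq_image_lessThan:
  assumes "(f ^^ s) w \<in> (\<lambda>j. (f ^^ j) w) ` {..<s}"
  shows "trajectory f w = (\<lambda>j. (f ^^ j) w) ` {..<s}"
proof
  show "trajectory f w \<subseteq> (\<lambda>j. (f ^^ j) w) ` {..<s}"
  proof (rule trajectory_subsetI)
    show "w \<in> (\<lambda>j. (f ^^ j) w) ` {..<s}"
      using assms by (auto intro: image_eqI[of _ _ 0])
  next
    fix y assume "y \<in> (\<lambda>j. (f ^^ j) w) ` {..<s}"
    then obtain i where "i < s" "f y = (f ^^ Suc i) w" by auto
    then show "f y \<in> (\<lambda>j. (f ^^ j) w) ` {..<s}"
    proof (cases "Suc i = s")
      case True
      then show ?thesis using assms \<open>f y = (f ^^ Suc i) w\<close> by simp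
    next
      case False
      then show ?thesis
        using \<open>i < s\<close> \<open>f y = (f ^^ Suc i) w\<close> by (intro image_eqI[of _ _ "Suc i"]) auto
    qed
  qed
qed (auto simp: trajectory_def)

lemma sixlen_eq_card_trajectory:
  assumes "finite (trajectory f w)"
  shows "sixlen f w = card (trajectory f w)"
proof -
  let ?orb = "\<lambda>j. (f ^^ j) w"
  define P where "P k \<longleftrightarrow> k \<ge> 1 \<and> (f ^^ k) w \<in> ?orb ` {0..k-1}" for k
  have P_iff: "P k \<longleftrightarrow> k \<ge> 1 \<and> (f ^^ k) w \<in> ?orb ` {..<k}" for k
    unfolding P_def by (cases k) (auto simp: lessThan_Suc_atMost atLeast0AtMost)
  have "\<not> inj ?orb"
    using assms finite_imageD unfolding trajectory_def by blast
  then obtain i j where "i \<noteq> j" "?orb i = ?orb j"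
    unfolding inj_def by blast
  then have "P (max i j)"
    unfolding P_iff by (auto intro!: image_eqI[of _ _ "min i j"] simp: max_def min_def)
  define s where "s = sixlen f w"
  have "s = (LEAST k. P k)"
    unfolding s_def sixlen_def P_def ..
  then have "P s" using LeastI[of P, OF \<open>P (max i j)\<close>] by simp
  then have traj: "trajectory f w = ?orb ` {..<s}"
    by (simp add: P_iff trajectory_eq_image_lessThan)
  have "inj_on ?orb {..<s}"
  proof (rule inj_onI, rule ccontr)
    fix i j assume "i \<in> {..<s}" "j \<in> {..<s}" "?orb i = ?orb j" "i \<noteq> j"
    then have "P (max i j)"
      unfolding P_iff by (auto intro!: image_eqI[of _ _ "min i j"] simp: max_def min_def)
    with \<open>i \<in> {..<s}\<close> \<open>j \<in> {..<s}\<close> \<open>s = (LEAST k. P k)\<close> show False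
      using not_less_Least[of "max i j" P] by simp
  qed
  then show ?thesis
    unfolding traj s_def[symmetric] by (simp add: card_image)
qed

section \<open>Inserting a vertex of in-degree one\<close>

text \<open>Subdivide the edge \<open>x \<rightarrow> g x\<close> by the new vertex \<open>v\<close>; for \<open>x = v\<close> this adds a loop at \<open>v\<close>.\<close>

definition insert_vertex :: "'a \<Rightarrow> ('a \<Rightarrow> 'a) \<Rightarrow> 'a \<Rightarrow> 'a \<Rightarrow> 'a" where
  "insert_vertex v g x = (\<lambda>y. if y = x then v else if y = v then g x else g y)"

lemma trajectory_insert_vertex_notin:
  assumes "v \<notin> trajectory g w" "x \<notin> trajectory g w"
  shows "trajectory (insert_vertex v g x) w = trajectory g w"
proof -
  have "(insert_vertex v g x ^^ j) w = (g ^^ j) w" for j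
  proof (induction j)
    case (Suc j)
    have "(g ^^ j) w \<in> trajectory g w" unfolding trajectory_def by blast
    with Suc assms show ?case by (auto simp: insert_vertex_def)
  qed simp
  then show ?thesis unfolding trajectory_def by simp
qed

lemma trajectory_insert_vertex_in:
  assumes "v \<notin> trajectory g w" "x \<in> trajectory g w"
  shows "trajectory (insert_vertex v g x) w = insert v (trajectory g w)"
proof
  let ?f = "insert_vertex v g x"
  have "x \<noteq> v" using assms by blast
  show "trajectory ?f w \<subseteq> insert v (trajectory g w)"
    using assms by (intro trajectory_subsetI) (auto simp: insert_vertex_def trajectory_closed)
  have "trajectory g w \<subseteq> trajectory ?f w \<inter> trajectory g w"
  proof (rule trajectory_subsetI)
    fix y assume y: "y \<in> trajectory ?f w \<inter> trajectory g w"
    have "g y \<in> trajectory ?f w"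
    proof (cases "y = x")
      case True
      then have "g y = ?f (?f y)" using \<open>x \<noteq> v\<close> by (simp add: insert_vertex_def)
      then show ?thesis using y by (simp add: trajectory_closed)
    next
      case False
      then have "g y = ?f y" using y assms(1) by (auto simp: insert_vertex_def)
      then show ?thesis using y by (simp add: trajectory_closed)
    qed
    then show "g y \<in> trajectory ?f w \<inter> trajectory g w"
      using y by (simp add: trajectory_closed)
  qed simp
  moreover have "v \<in> trajectory ?f w"
    using calculation assms(2) trajectory_closed[of x ?f w] by (auto simp: insert_vertex_def)
  ultimately show "insert v (trajectory g w) \<subseteq> trajectory ?f w" by blast
qed

lemma sixlen_insert_vertex:
  assumes "finite V" "g \<in> V - {v} \<rightarrow> V - {v}" "w \<in> V - {v}"
  shows "sixlen (insert_vertex v g x) w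
           = (if x \<in> trajectory g w then sixlen g w + 1 else sixlen g w)"
proof -
  have "trajectory g w \<subseteq> V - {v}"
    by (rule trajectory_subset_Pi[OF assms(2,3)])
  then have "finite (trajectory g w)" "v \<notin> trajectory g w"
    using assms(1) finite_subset by auto
  then show ?thesis
    by (simp add: sixlen_eq_card_trajectory trajectory_insert_vertex_notin
        trajectory_insert_vertex_in)
qed

lemma insert_vertex_fibre_new:
  assumes "g \<in> V - {v} \<rightarrow> V - {v}" "x \<in> V"
  shows "{u \<in> V. insert_vertex v g x u = v} = {x}"
  using assms by (auto simp: insert_vertex_def)

lemma card_insert_vertex_fibre_old:
  assumes "g \<in> V - {v} \<rightarrow> V - {v}" "x \<in> V" "v \<in> V" "y \<noteq> v"
  shows "card {u \<in> V. insert_vertex v g x u = y} = card {u \<in> V - {v}. g u = y}"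
proof -
  have "{u \<in> V. insert_vertex v g x u = y}
          = Transposition.transpose x v ` {u \<in> V - {v}. g u = y}"
    using assms by (auto simp: in_transpose_image_iff Transposition.transpose_def insert_vertex_def)
  then show ?thesis by (simp add: card_image)
qed

lemma insert_vertex_PiE:
  assumes "g \<in> V - {v} \<rightarrow>\<^sub>E V - {v}" "x \<in> V" "v \<in> V"
  shows "insert_vertex v g x \<in> V \<rightarrow>\<^sub>E V"
  using assms by (auto simp: insert_vertex_def PiE_iff extensional_def)

lemma insert_vertex_fgraphs:
  assumes "g \<in> fgraphs (V - {v}) d" "x \<in> V" "v \<in> V" "d v = 1"
  shows "insert_vertex v g x \<in> fgraphs V d"
proof -
  have g: "g \<in> V - {v} \<rightarrow>\<^sub>E V - {v}"
    using assms(1) by (simp add: fgraphs_def)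
  then have "g \<in> V - {v} \<rightarrow> V - {v}" by (simp add: PiE_def)
  then have "card {u \<in> V. insert_vertex v g x u = y} = d y" if "y \<in> V" for y
    using assms that by (cases "y = v")
      (simp_all add: insert_vertex_fibre_new card_insert_vertex_fibre_old fgraphs_def)
  then show ?thesis
    using insert_vertex_PiE[OF g assms(2,3)] by (simp add: fgraphs_def)
qed

definition remove_vertex :: "'a set \<Rightarrow> 'a \<Rightarrow> ('a \<Rightarrow> 'a) \<Rightarrow> 'a \<Rightarrow> 'a" where
  "remove_vertex V v f = restrict (\<lambda>u. if f u = v then f v else f u) (V - {v})"

lemma remove_insert_vertex:
  assumes "g \<in> V - {v} \<rightarrow>\<^sub>E V - {v}"
  shows "remove_vertex V v (insert_vertex v g x) = g"
  using assms by (intro ext) (auto simp: remove_vertex_def insert_vertex_def PiE_iff extensional_def)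

lemma insert_remove_vertex:
  assumes "f \<in> V \<rightarrow>\<^sub>E V" "v \<in> V" "{u \<in> V. f u = v} = {x}"
  shows "remove_vertex V v f \<in> V - {v} \<rightarrow>\<^sub>E V - {v}"
    and "insert_vertex v (remove_vertex V v f) x = f"
proof -
  have fibre: "u \<in> V \<Longrightarrow> f u = v \<longleftrightarrow> u = x" for u
    using assms(3) by blast
  have "x \<in> V" "f x = v"
    using assms(3) by blast+
  show "remove_vertex V v f \<in> V - {v} \<rightarrow>\<^sub>E V - {v}"
    using assms(1,2) fibre by (auto simp: remove_vertex_def PiE_iff)
  show "insert_vertex v (remove_vertex V v f) x = f"
    using assms(1,2) fibre \<open>x \<in> V\<close> \<open>f x = v\<close>[symmetric]
    by (intro ext) (auto simp: remove_vertex_def insert_vertex_def PiE_iff extensional_def)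
qed

lemma remove_vertex_fgraphs:
  assumes "f \<in> fgraphs V d" "v \<in> V" "{u \<in> V. f u = v} = {x}"
  shows "remove_vertex V v f \<in> fgraphs (V - {v}) d"
proof -
  let ?g = "remove_vertex V v f"
  have "f \<in> V \<rightarrow>\<^sub>E V" using assms(1) by (simp add: fgraphs_def)
  from insert_remove_vertex[OF this assms(2,3)]
  have g: "?g \<in> V - {v} \<rightarrow>\<^sub>E V - {v}" and f: "insert_vertex v ?g x = f" by blast+
  have "x \<in> V" using assms(3) by blast
  have "card {u \<in> V - {v}. ?g u = y} = card {u \<in> V. f u = y}" if "y \<in> V - {v}" for y
    using card_insert_vertex_fibre_old[of ?g V v x y] g f \<open>x \<in> V\<close> assms(2) that
    by (simp add: PiE_def)
  then show ?thesis
    using g assms(1) by (simp add: fgraphs_def)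
qed

lemma bij_betw_insert_vertex:
  assumes "v \<in> V" "d v = 1"
  shows "bij_betw (\<lambda>(g, x). insert_vertex v g x) (fgraphs (V - {v}) d \<times> V) (fgraphs V d)"
proof (rule bij_betw_imageI)
  show "inj_on (\<lambda>(g, x). insert_vertex v g x) (fgraphs (V - {v}) d \<times> V)"
  proof (rule inj_onI, clarify)
    fix g x g' x'
    assume g: "g \<in> fgraphs (V - {v}) d" "g' \<in> fgraphs (V - {v}) d"
      and x: "x \<in> V" "x' \<in> V" and eq: "insert_vertex v g x = insert_vertex v g' x'"
    have gE: "g \<in> V - {v} \<rightarrow>\<^sub>E V - {v}" and g'E: "g' \<in> V - {v} \<rightarrow>\<^sub>E V - {v}"
      using g by (simp_all add: fgraphs_def)
    then have "{x} = {x'}"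
      using insert_vertex_fibre_new[of g V v x] insert_vertex_fibre_new[of g' V v x'] x eq
      by (simp add: PiE_def)
    moreover have "g = g'"
      using remove_insert_vertex[OF gE, of x] remove_insert_vertex[OF g'E, of x'] eq by simp
    ultimately show "g = g' \<and> x = x'" by simp
  qed
  show "(\<lambda>(g, x). insert_vertex v g x) ` (fgraphs (V - {v}) d \<times> V) = fgraphs V d"
  proof
    show "(\<lambda>(g, x). insert_vertex v g x) ` (fgraphs (V - {v}) d \<times> V) \<subseteq> fgraphs V d"
      using assms insert_vertex_fgraphs by fastforce
    show "fgraphs V d \<subseteq> (\<lambda>(g, x). insert_vertex v g x) ` (fgraphs (V - {v}) d \<times> V)"
    proof
      fix f assume f: "f \<in> fgraphs V d"
      then have "card {u \<in> V. f u = v} = 1"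
        using assms by (simp add: fgraphs_def)
      then obtain x where x: "{u \<in> V. f u = v} = {x}"
        by (rule card_1_singletonE)
      have "f \<in> V \<rightarrow>\<^sub>E V" using f by (simp add: fgraphs_def)
      then have "f = insert_vertex v (remove_vertex V v f) x"
        using insert_remove_vertex(2)[OF _ assms(1) x] by simp
      moreover have "remove_vertex V v f \<in> fgraphs (V - {v}) d" "x \<in> V"
        using remove_vertex_fgraphs[OF f assms(1) x] x by blast+
      ultimately show "f \<in> (\<lambda>(g, x). insert_vertex v g x) ` (fgraphs (V - {v}) d \<times> V)"
        by force
    qed
  qed
qed

section \<open>The six-length distribution as a Polya urn\<close>

lemma fgraphs_finite: "finite V \<Longrightarrow> finite (fgraphs V d)"
  unfolding fgraphs_def by (rule finite_subset[OF _ finite_PiE[of V "\<lambda>_. V"]]) auto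

lemma pmf_of_set_Times:
  assumes "finite A" "A \<noteq> {}" "finite B" "B \<noteq> {}"
  shows "pmf_of_set (A \<times> B) = bind_pmf (pmf_of_set A) (\<lambda>a. map_pmf (Pair a) (pmf_of_set B))"
proof -
  have "pmf_of_set (A \<times> B) = pair_pmf (pmf_of_set A) (pmf_of_set B)"
  proof (rule pmf_eqI)
    fix i :: "'a \<times> 'b"
    show "pmf (pmf_of_set (A \<times> B)) i = pmf (pair_pmf (pmf_of_set A) (pmf_of_set B)) i"
      using assms by (cases i) (simp add: pmf_pair card_cartesian_product indicator_def)
  qed
  then show ?thesis by (simp add: pair_pmf_def map_pmf_def)
qed

lemma map_mem_pmf_of_set:
  assumes "finite B" "B \<noteq> {}"
  shows "map_pmf (\<lambda>x. x \<in> A) (pmf_of_set B) = bernoulli_pmf (card (A \<inter> B) / card B)"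
proof (rule pmf_eqI)
  fix i
  have "spmf (map_spmf (\<lambda>x. x \<in> A) (spmf_of_set B)) i
          = spmf (spmf_of_pmf (bernoulli_pmf (card (A \<inter> B) / card B))) i"
    by (simp only: map_mem_spmf_of_set[OF assms])
  then show "pmf (map_pmf (\<lambda>x. x \<in> A) (pmf_of_set B)) i
               = pmf (bernoulli_pmf (card (A \<inter> B) / card B)) i"
    by (simp flip: spmf_of_pmf_pmf_of_set[OF assms])
qed

definition urn_draw :: "nat \<Rightarrow> nat \<Rightarrow> nat pmf" where
  "urn_draw N a = map_pmf (\<lambda>red. if red then a + 1 else a) (bernoulli_pmf (a / N))"

lemma polya_Suc_urn_draw:
  "polya (Suc k) a b = bind_pmf (urn_draw (a + b) a) (\<lambda>r. polya k r (a + b + 1 - r))"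
  unfolding urn_draw_def bind_map_pmf polya.simps by (rule bind_pmf_cong) auto

lemma map_sixlen_insert_vertex_pmf_of_set:
  assumes "finite V" "g \<in> V - {v} \<rightarrow> V - {v}" "w \<in> V - {v}"
  shows "map_pmf (\<lambda>x. sixlen (insert_vertex v g x) w) (pmf_of_set V)
           = urn_draw (card V) (sixlen g w)"
proof -
  let ?T = "trajectory g w"
  have T: "?T \<subseteq> V" using trajectory_subset_Pi[OF assms(2,3)] by blast
  then have "card ?T = sixlen g w"
    using finite_subset[OF T assms(1)] by (simp add: sixlen_eq_card_trajectory)
  moreover have "V \<noteq> {}" using assms(3) by blast
  ultimately have draw:
      "map_pmf (\<lambda>x. x \<in> ?T) (pmf_of_set V) = bernoulli_pmf (sixlen g w / card V)"
    using map_mem_pmf_of_set[OF assms(1)] T by (simp add: Int_absorb2)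
  show ?thesis
    unfolding sixlen_insert_vertex[OF assms] urn_draw_def draw[symmetric]
    by (simp add: pmf.map_comp comp_def)
qed

lemma sixlen_dist_remove_vertex:
  assumes "finite V" "v \<in> V" "w \<in> V - {v}" "d v = 1" "fgraphs (V - {v}) d \<noteq> {}"
  shows "sixlen_dist V d w = bind_pmf (sixlen_dist (V - {v}) d w) (urn_draw (card V))"
proof -
  let ?G = "fgraphs (V - {v}) d"
  have G: "finite ?G" "?G \<noteq> {}" using assms(1,5) by (simp_all add: fgraphs_finite)
  have V: "V \<noteq> {}" using assms(2) by blast
  have "pmf_of_set (fgraphs V d)
          = map_pmf (\<lambda>(g, x). insert_vertex v g x) (pmf_of_set (?G \<times> V))"
    using bij_betw_insert_vertex[of v V d, OF assms(2,4)] G assms(1,2)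
    by (subst map_pmf_of_set_bij_betw) auto
  also have "\<dots> = bind_pmf (pmf_of_set ?G) (\<lambda>g. map_pmf (insert_vertex v g) (pmf_of_set V))"
    by (simp add: pmf_of_set_Times[OF G assms(1) V] map_bind_pmf pmf.map_comp comp_def)
  finally have "sixlen_dist V d w = bind_pmf (pmf_of_set ?G)
      (\<lambda>g. map_pmf (\<lambda>x. sixlen (insert_vertex v g x) w) (pmf_of_set V))"
    by (simp add: sixlen_dist_def map_bind_pmf pmf.map_comp comp_def)
  also have "\<dots> = bind_pmf (pmf_of_set ?G) (\<lambda>g. urn_draw (card V) (sixlen g w))"
  proof (rule bind_pmf_cong[OF refl])
    fix g assume "g \<in> set_pmf (pmf_of_set ?G)"
    then have "g \<in> V - {v} \<rightarrow> V - {v}" using G by (simp add: fgraphs_def PiE_def)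
    then show "map_pmf (\<lambda>x. sixlen (insert_vertex v g x) w) (pmf_of_set V)
                 = urn_draw (card V) (sixlen g w)"
      by (rule map_sixlen_insert_vertex_pmf_of_set[OF assms(1) _ assms(3)])
  qed
  also have "\<dots> = bind_pmf (sixlen_dist (V - {v}) d w) (urn_draw (card V))"
    by (simp add: sixlen_dist_def bind_map_pmf)
  finally show ?thesis .
qed

lemma ex_PiE_card_fibres:
  assumes "finite V" "finite U" "(\<Sum>v\<in>V. d v) = card U"
  shows "\<exists>f \<in> U \<rightarrow>\<^sub>E V. \<forall>y\<in>V. card {u \<in> U. f u = y} = d y"
  using assms
proof (induction V arbitrary: U rule: finite_induct)
  case (insert y V)
  then obtain T where T: "T \<subseteq> U" "card T = d y"
    using obtain_subset_with_card_n[of "d y" U] by (metis le_add1 sum.insert)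
  with insert have "card (U - T) = (\<Sum>v\<in>V. d v)"
    by (simp add: card_Diff_subset finite_subset)
  then obtain f where f: "f \<in> U - T \<rightarrow>\<^sub>E V" "\<forall>z\<in>V. card {u \<in> U - T. f u = z} = d z"
    using insert.IH[of "U - T"] insert.prems(1) by auto
  define f' where "f' u = (if u \<in> T then y else f u)" for u
  have "f' \<in> U \<rightarrow>\<^sub>E insert y V"
    using f(1) T(1) by (auto simp: f'_def PiE_iff extensional_def)
  moreover have "card {u \<in> U. f' u = z} = d z" if "z \<in> insert y V" for z
  proof (cases "z = y")
    case True
    have "{u \<in> U. f' u = z} = T"
      using True T(1) f(1) insert.hyps(2) by (auto simp: f'_def PiE_iff)
    then show ?thesis using T True by simp
  next
    case False
    then have "{u \<in> U. f' u = z} = {u \<in> U - T. f u = z}" by (auto simp: f'_def)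
    then show ?thesis using f(2) False that by simp
  qed
  ultimately show ?case by blast
qed simp

lemma fgraphs_nonempty:
  assumes "finite V" "(\<Sum>v\<in>V. d v) = card V"
  shows "fgraphs V d \<noteq> {}"
  using ex_PiE_card_fibres[OF assms(1,1,2)] by (auto simp: fgraphs_def)

lemma sixlen_dist_le_card:
  assumes "s \<in> set_pmf (sixlen_dist V d w)" "finite V" "w \<in> V" "fgraphs V d \<noteq> {}"
  shows "s \<le> card V"
proof -
  obtain f where f: "f \<in> fgraphs V d" "s = sixlen f w"
    using assms fgraphs_finite[of V d] by (auto simp: sixlen_dist_def)
  then have "trajectory f w \<subseteq> V"
    using assms(3) by (intro trajectory_subset_Pi) (auto simp: fgraphs_def PiE_def)
  with f(2) assms(2) show ?thesis
    by (simp add: sixlen_eq_card_trajectory card_mono finite_subset)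
qed

lemma sum_Diff_unit_vertices:
  assumes "finite V" "S \<subseteq> V" "\<forall>v\<in>S. d v = 1" "(\<Sum>v\<in>V. d v) = card V"
  shows "(\<Sum>v\<in>V - S. d v) = card (V - S)"
proof -
  have "(\<Sum>v\<in>S. d v) = card S" using assms(3) by simp
  with assms show ?thesis
    by (simp add: sum_diff_nat card_Diff_subset finite_subset)
qed

theorem sixlen_dist_remove_unit_vertices:
  assumes "finite V" "w \<in> V" "S \<subseteq> V - {w}" "\<forall>v\<in>S. d v = 1" "(\<Sum>v\<in>V. d v) = card V"
  shows "sixlen_dist V d w
           = bind_pmf (sixlen_dist (V - S) d w) (\<lambda>s. polya (card S) s (card (V - S) + 1 - s))"
proof -
  have "finite S" using assms(1,3) finite_subset by blast
  then show ?thesis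
    using assms(3,4)
  proof (induction S rule: finite_induct)
    case (insert v S)
    let ?W = "V - S"
    have v: "v \<in> ?W" "w \<in> ?W - {v}" "d v = 1" using insert assms(2) by auto
    have W: "V - insert v S = ?W - {v}" by auto
    have "(\<Sum>u\<in>V - insert v S. d u) = card (V - insert v S)"
      using insert.prems assms(1,5) by (intro sum_Diff_unit_vertices) auto
    then have ne: "fgraphs (?W - {v}) d \<noteq> {}"
      using assms(1) by (simp add: W fgraphs_nonempty)
    have card_W: "card ?W = card (?W - {v}) + 1"
      using card_Suc_Diff1[of ?W v] v(1) assms(1) by simp
    have "sixlen_dist V d w
            = bind_pmf (sixlen_dist ?W d w) (\<lambda>s. polya (card S) s (card ?W + 1 - s))"
      using insert by simp
    also have "\<dots> = bind_pmf (sixlen_dist (?W - {v}) d w)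
        (\<lambda>s. bind_pmf (urn_draw (card ?W) s) (\<lambda>r. polya (card S) r (card ?W + 1 - r)))"
      using assms(1) v ne by (simp add: sixlen_dist_remove_vertex bind_assoc_pmf)
    also have "\<dots> = bind_pmf (sixlen_dist (?W - {v}) d w)
        (\<lambda>s. polya (Suc (card S)) s (card (?W - {v}) + 1 - s))"
    proof (rule bind_pmf_cong[OF refl])
      fix s assume "s \<in> set_pmf (sixlen_dist (?W - {v}) d w)"
      then have "s \<le> card (?W - {v})"
        using sixlen_dist_le_card assms(1) v(2) ne by blast
      then have "s + (card (?W - {v}) + 1 - s) = card ?W"
        using card_W by simp
      then show "bind_pmf (urn_draw (card ?W) s) (\<lambda>r. polya (card S) r (card ?W + 1 - r))
                   = polya (Suc (card S)) s (card (?W - {v}) + 1 - s)"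
        unfolding polya_Suc_urn_draw by simp
    qed
    finally show ?case
      using insert.hyps by (simp add: W)
  qed (simp add: bind_return_pmf')
qed

theorem corollary4p7:
  fixes n w :: nat and d :: "nat \<Rightarrow> nat" and S :: "nat set"
  assumes "(\<Sum>j\<in>{1..n}. d j) = n"
    and "w \<in> {1..n}"
    and "nhat n d < n"
    and "S \<subseteq> {1..n} - {w}"
    and "card S = n - nhat n d"
    and "\<forall>v\<in>S. d v = 1"
  shows "sixlen_dist {1..n} d w =
         bind_pmf (sixlen_dist ({1..n} - S) d w)
           (\<lambda>s. polya (n - nhat n d) s (nhat n d + 1 - s))"
proof -
  have "card ({1..n} - S) = nhat n d"
    using assms(3-5) by (subst card_Diff_subset) (auto intro: finite_subset)
  then show ?thesis
    using sixlen_dist_remove_unit_vertices[of "{1..n}" w S d] assms by simp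
qed

end
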